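(* Let $\gamma$ be a gauge on $\mathbb{R}^d$ with skewness $\sigma$. Let $A\subset\mathbb{R}^d$ be finite with positive weights summing to $1$, let $C\subseteq A$ with $w_C<\frac{1}{1+\sigma}$, and let $D=A\setminus C$. Let $C_c$ be obtained by moving the points of $C$ to arbitrary positions (keeping their weights), and let $x$ be a Fermat–Weber point of the weighted set $D\cup C_c$. Then $x\in\mathrm{EH}_\gamma(D)$.
   Context: A gauge $\gamma$ on $\mathbb{R}^d$ is the Minkowski functional of a convex compact set $B_\gamma$ with the origin in its interior (not necessarily symmetric); $\gamma^\circ(p)=\max\{\langle p,x\rangle:\gamma(x)=1\}$ is the dual gauge with unit ball $B_{\gamma^\circ}$; the skewness is $\sigma=\sup_{x\neq0}\gamma(x)/\gamma(-x)$. A Fermat–Weber point of a finite positively weighted set is a minimizer of $x\mapsto\sum_a w_a\gamma(x-a)$. For $p\in B_{\gamma^\circ}$ define $N(p)$ as follows: if $\gamma^\circ(p)=1$, $N(p)$ is the convex cone $\mathbb{R}_{\ge0}F(p)$ generated by the exposed face $F(p)=\{x\in B_\gamma:\langle p,x\rangle=1\}$ (equivalently $\mathbb{R}_{\ge0}\partial\gamma^\circ(p)$); if $\gamma^\circ(p)<1$, $N(p)=\{0\}$. For a finite set $S$ and a family $\pi=(p_s)_{s\in S}$ of points of $B_{\gamma^\circ}$, let $C_\pi=\bigcap_{s\in S}(s+N(p_s))$; a nonempty such $C_\pi$ is an elementary convex set for $S$. The elementary hull $\mathrm{EH}_\gamma(S)$ is the union of all bounded elementary convex sets for $S$. *)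

theory Defs
  imports "HOL-Analysis.Analysis"
begin

text \<open>A gauge is given by its unit ball B (convex, compact, 0 in the interior).
  mink_gauge B is the Minkowski functional of B.\<close>

definition is_gauge_ball :: "'a::euclidean_space set \<Rightarrow> bool" where
  "is_gauge_ball B \<longleftrightarrow> convex B \<and> compact B \<and> 0 \<in> interior B"

definition mink_gauge :: "'a::euclidean_space set \<Rightarrow> 'a \<Rightarrow> real" where
  "mink_gauge B x = Inf {t. 0 < t \<and> x \<in> (\<lambda>y. t *\<^sub>R y) ` B}"

definition dual_gauge :: "'a::euclidean_space set \<Rightarrow> 'a \<Rightarrow> real" where
  "dual_gauge B p = Sup {p \<bullet> x | x. mink_gauge B x = 1}"

definition dual_ball :: "'a::euclidean_space set \<Rightarrow> 'a set" where
  "dual_ball B = {p. dual_gauge B p \<le> 1}"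

definition skewness :: "'a::euclidean_space set \<Rightarrow> real" where
  "skewness B = Sup {mink_gauge B x / mink_gauge B (-x) | x. x \<noteq> 0}"

definition exposed_face :: "'a::euclidean_space set \<Rightarrow> 'a \<Rightarrow> 'a set" where
  "exposed_face B p = {x \<in> B. p \<bullet> x = 1}"

definition Ncone :: "'a::euclidean_space set \<Rightarrow> 'a \<Rightarrow> 'a set" where
  "Ncone B p = (if dual_gauge B p = 1
      then {t *\<^sub>R x | t x. 0 \<le> t \<and> x \<in> exposed_face B p} else {0})"

definition elem_set :: "'a::euclidean_space set \<Rightarrow> 'a set \<Rightarrow> ('a \<Rightarrow> 'a) \<Rightarrow> 'a set" where
  "elem_set B S p = (\<Inter>s\<in>S. (\<lambda>v. s + v) ` Ncone B (p s))"

definition elementary_hull :: "'a::euclidean_space set \<Rightarrow> 'a set \<Rightarrow> 'a set" where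
  "elementary_hull B S = \<Union> {elem_set B S p | p.
      (\<forall>s\<in>S. p s \<in> dual_ball B) \<and> elem_set B S p \<noteq> {} \<and> bounded (elem_set B S p)}"

text \<open>Fermat--Weber point of a weighted family of points (pos i, w i), i in I
  (a family, so coinciding positions are allowed and weights add up).\<close>
definition fermat_weber_point ::
    "'a::euclidean_space set \<Rightarrow> 'i set \<Rightarrow> ('i \<Rightarrow> 'a) \<Rightarrow> ('i \<Rightarrow> real) \<Rightarrow> 'a \<Rightarrow> bool" where
  "fermat_weber_point B I pos w x \<longleftrightarrow>
     (\<forall>y. (\<Sum>i\<in>I. w i * mink_gauge B (x - pos i)) \<le> (\<Sum>i\<in>I. w i * mink_gauge B (y - pos i)))"

end

theory Submission
  imports Defs
begin

text \<open>At a Fermat--Weber point \<open>x\<close> there are subgradients \<open>p\<^sub>a\<close> of the gauge at \<open>x - a\<close>, all in the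
  dual ball, with \<open>\<Sum> w\<^sub>a p\<^sub>a = 0\<close>. For the unmoved points \<open>s \<in> D\<close> this says \<open>x - s \<in> N(p\<^sub>s)\<close>,
  so \<open>x\<close> lies in the elementary convex set \<open>C\<^sub>\<pi>\<close> of \<open>D\<close> with \<open>\<pi> = (p\<^sub>s)\<close>. On \<open>C\<^sub>\<pi>\<close> the triangle
  inequality gives \<open>w(D) \<gamma>(z) \<le> \<Sum>\<^sub>D w\<^sub>s p\<^sub>s \<bullet> z + const\<close>, while the balance \<open>\<Sum> w p = 0\<close> bounds
  \<open>\<Sum>\<^sub>D w\<^sub>s p\<^sub>s \<bullet> z\<close> by \<open>w(C) \<gamma>(-z) \<le> \<sigma> w(C) \<gamma>(z)\<close>. Since \<open>w(C) < 1/(1+\<sigma>)\<close> means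
  \<open>w(D) > \<sigma> w(C)\<close>, the gauge is bounded on \<open>C\<^sub>\<pi>\<close>.\<close>

locale gauge_ball =
  fixes B :: "'a::euclidean_space set"
  assumes is_gauge_ball: "is_gauge_ball B"
begin

subsection \<open>Minkowski gauges\<close>

abbreviation gauge :: "'a \<Rightarrow> real" where "gauge \<equiv> mink_gauge B"

lemma convex_B: "convex B" and compact_B: "compact B" and zero_in_interior_B: "0 \<in> interior B"
  using is_gauge_ball by (auto simp: is_gauge_ball_def)

lemma zero_in_B: "0 \<in> B"
  using zero_in_interior_B interior_subset by blast

lemma inner_radius:
  obtains r where "r > 0" "cball 0 r \<subseteq> B"
proof -
  obtain e where "e > 0" "ball 0 e \<subseteq> B"
    using zero_in_interior_B mem_interior by blast
  then show thesis
    using that[of "e/2"] by (auto simp: subset_iff)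
qed

lemma outer_radius:
  obtains R where "R > 0" "\<And>x. x \<in> B \<Longrightarrow> norm x \<le> R"
  using compact_imp_bounded[OF compact_B] bounded_pos by blast

definition dilation_factors :: "'a \<Rightarrow> real set" where
  "dilation_factors x = {t. 0 < t \<and> x \<in> (\<lambda>y. t *\<^sub>R y) ` B}"

lemma gauge_eq_Inf: "gauge x = Inf (dilation_factors x)"
  unfolding mink_gauge_def dilation_factors_def ..

lemma mem_dilation_factors_iff: "t \<in> dilation_factors x \<longleftrightarrow> 0 < t \<and> (1/t) *\<^sub>R x \<in> B"
proof
  assume "t \<in> dilation_factors x"
  then show "0 < t \<and> (1/t) *\<^sub>R x \<in> B" by (auto simp: dilation_factors_def)
next
  assume t: "0 < t \<and> (1/t) *\<^sub>R x \<in> B"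
  then have "x = t *\<^sub>R ((1/t) *\<^sub>R x)" by simp
  then show "t \<in> dilation_factors x" using t unfolding dilation_factors_def by blast
qed

lemma dilation_factors_upward:
  assumes "t \<in> dilation_factors x" "t \<le> s"
  shows "s \<in> dilation_factors x"
proof -
  have t: "0 < t" "(1/t) *\<^sub>R x \<in> B" using assms mem_dilation_factors_iff by auto
  have "(t/s) *\<^sub>R ((1/t) *\<^sub>R x) + (1 - t/s) *\<^sub>R 0 \<in> B"
    using t assms by (intro convexD[OF convex_B _ zero_in_B]) auto
  then show ?thesis using t assms mem_dilation_factors_iff by auto
qed

lemma dilation_factors_nonempty: "dilation_factors x \<noteq> {}"
proof -
  obtain r where r: "r > 0" "cball 0 r \<subseteq> B" by (rule inner_radius)
  have "norm x / r + 1 > 0" using r by (simp add: add_nonneg_pos)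
  moreover from this have "norm ((1 / (norm x / r + 1)) *\<^sub>R x) \<le> r"
    using r by (simp add: divide_le_eq field_simps)
  ultimately have "norm x / r + 1 \<in> dilation_factors x"
    using r mem_dilation_factors_iff by auto
  then show ?thesis by blast
qed

lemma gauge_nonneg: "0 \<le> gauge x"
  unfolding gauge_eq_Inf
  by (rule cInf_greatest[OF dilation_factors_nonempty]) (simp add: mem_dilation_factors_iff)

lemma gauge_le_iff:
  assumes "t > 0"
  shows "gauge x \<le> t \<longleftrightarrow> (1/t) *\<^sub>R x \<in> B"
proof
  assume le: "gauge x \<le> t"
  have "s \<in> dilation_factors x" if st: "s > t" for s
  proof -
    obtain u where "u \<in> dilation_factors x" "u < s"
      using cInf_lessD[OF dilation_factors_nonempty, of x s] le st gauge_eq_Inf by force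
    then show ?thesis using dilation_factors_upward by auto
  qed
  then have "(1 / (t + 1/Suc n)) *\<^sub>R x \<in> B" for n
    using mem_dilation_factors_iff by simp
  moreover have "(\<lambda>n. (1 / (t + 1/Suc n)) *\<^sub>R x) \<longlonglongrightarrow> (1/t) *\<^sub>R x"
    using assms tendsto_add[OF tendsto_const LIMSEQ_inverse_real_of_nat, of t]
    by (intro tendsto_intros) (auto simp: inverse_eq_divide)
  ultimately show "(1/t) *\<^sub>R x \<in> B"
    by (rule closed_sequentially[OF compact_imp_closed[OF compact_B]])
next
  assume "(1/t) *\<^sub>R x \<in> B"
  then have "t \<in> dilation_factors x" using assms mem_dilation_factors_iff by simp
  moreover have "bdd_below (dilation_factors x)"
    unfolding bdd_below_def dilation_factors_def by (auto intro: exI[of _ 0])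
  ultimately show "gauge x \<le> t"
    unfolding gauge_eq_Inf by (rule cInf_lower)
qed

lemma gauge_le_1_iff: "gauge x \<le> 1 \<longleftrightarrow> x \<in> B"
  using gauge_le_iff[of 1] by simp

lemma gauge_le_norm_div:
  assumes "r > 0" "cball 0 r \<subseteq> B"
  shows "gauge x \<le> norm x / r"
proof (cases "x = 0")
  case True
  have "gauge x \<le> t" if "t > 0" for t
    using gauge_le_iff[OF that] True zero_in_B by simp
  then show ?thesis using True by (simp add: dense_ge)
next
  case False
  then have "norm x / r > 0" using assms by simp
  moreover have "norm ((1 / (norm x / r)) *\<^sub>R x) = r" using False assms by simp
  ultimately show ?thesis using gauge_le_iff assms by auto
qed

lemma norm_le_mult_gauge:
  assumes "R > 0" "\<And>y. y \<in> B \<Longrightarrow> norm y \<le> R"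
  shows "norm x \<le> R * gauge x"
proof (rule field_le_epsilon)
  fix e :: real assume "e > 0"
  define t where "t = gauge x + e / R"
  have "t > 0" using gauge_nonneg \<open>e > 0\<close> assms by (simp add: t_def add_nonneg_pos)
  have "(1/t) *\<^sub>R x \<in> B" using gauge_le_iff[OF \<open>t > 0\<close>, of x] \<open>e > 0\<close> assms by (simp add: t_def)
  then have "norm x / t \<le> R" using assms(2) \<open>t > 0\<close> by fastforce
  then have "norm x \<le> R * t" using \<open>t > 0\<close> by (simp add: divide_le_eq mult.commute)
  then show "norm x \<le> R * gauge x + e" using assms by (simp add: t_def algebra_simps)
qed

lemma gauge_zero [simp]: "gauge 0 = 0"
  using gauge_le_norm_div[of _ 0] gauge_nonneg[of 0] inner_radius by force

lemma gauge_pos: "x \<noteq> 0 \<Longrightarrow> 0 < gauge x"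
  using norm_le_mult_gauge[of _ x] gauge_nonneg[of x] outer_radius
  by (metis mult_zero_right norm_le_zero_iff order_less_le)

lemma gauge_scaleR:
  assumes "c \<ge> 0"
  shows "gauge (c *\<^sub>R x) = c * gauge x"
proof (cases "c = 0")
  case False
  then have c: "c > 0" using assms by simp
  have iff: "gauge (c *\<^sub>R x) \<le> t \<longleftrightarrow> c * gauge x \<le> t" if t: "t > 0" for t
  proof -
    have "gauge (c *\<^sub>R x) \<le> t \<longleftrightarrow> (1/t) *\<^sub>R (c *\<^sub>R x) \<in> B" using gauge_le_iff[OF t] .
    also have "\<dots> \<longleftrightarrow> (1/(t/c)) *\<^sub>R x \<in> B" using c by simp
    also have "\<dots> \<longleftrightarrow> gauge x \<le> t/c" using gauge_le_iff[of "t/c"] c t by simp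
    also have "\<dots> \<longleftrightarrow> c * gauge x \<le> t" using c by (simp add: le_divide_eq mult.commute)
    finally show ?thesis .
  qed
  have "0 \<le> c * gauge x" "0 \<le> gauge (c *\<^sub>R x)" using c gauge_nonneg by auto
  show ?thesis
  proof (rule antisym; rule dense_ge)
    show "gauge (c *\<^sub>R x) \<le> t" if "c * gauge x < t" for t
      using iff[of t] that \<open>0 \<le> c * gauge x\<close> by simp
    show "c * gauge x \<le> t" if "gauge (c *\<^sub>R x) < t" for t
      using iff[of t] that \<open>0 \<le> gauge (c *\<^sub>R x)\<close> by simp
  qed
qed simp

lemma gauge_triangle: "gauge (x + y) \<le> gauge x + gauge y"
proof (rule field_le_epsilon)
  fix e :: real assume e: "e > 0"
  define s where "s = gauge x + e/2"
  define t where "t = gauge y + e/2"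
  have sp: "s > 0" and tp: "t > 0" using gauge_nonneg e by (auto simp: s_def t_def add_nonneg_pos)
  have xs: "(1/s) *\<^sub>R x \<in> B" using gauge_le_iff[OF sp, of x] e by (simp add: s_def)
  have yt: "(1/t) *\<^sub>R y \<in> B" using gauge_le_iff[OF tp, of y] e by (simp add: t_def)
  have "(s/(s+t)) *\<^sub>R ((1/s) *\<^sub>R x) + (t/(s+t)) *\<^sub>R ((1/t) *\<^sub>R y) \<in> B"
    using convexD[OF convex_B xs yt, of "s/(s+t)" "t/(s+t)"] sp tp by (simp add: add_divide_distrib[symmetric])
  moreover have "(s/(s+t)) *\<^sub>R ((1/s) *\<^sub>R x) + (t/(s+t)) *\<^sub>R ((1/t) *\<^sub>R y) = (1/(s+t)) *\<^sub>R (x + y)"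
    using sp tp by (simp add: scaleR_add_right)
  ultimately have "gauge (x + y) \<le> s + t" using gauge_le_iff[of "s+t"] sp tp by simp
  then show "gauge (x + y) \<le> gauge x + gauge y + e" by (simp add: s_def t_def)
qed

lemma continuous_on_gauge: "continuous_on UNIV gauge"
proof -
  obtain r where r: "r > 0" "cball 0 r \<subseteq> B" by (rule inner_radius)
  have diff: "gauge x - gauge y \<le> norm (x - y) / r" for x y
    using gauge_triangle[of y "x - y"] gauge_le_norm_div[OF r, of "x - y"] by simp
  have "(1/r)-lipschitz_on UNIV gauge"
  proof (intro lipschitz_onI)
    fix x y
    show "dist (gauge x) (gauge y) \<le> 1 / r * dist x y"
      using diff[of x y] diff[of y x] by (simp add: dist_real_def dist_norm abs_le_iff norm_minus_commute)
  qed (use r in simp)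
  then show ?thesis by (rule lipschitz_on_continuous_on)
qed

lemma gauge_normalize:
  assumes "x \<noteq> 0"
  shows "gauge ((1 / gauge x) *\<^sub>R x) = 1"
proof -
  have "0 < gauge x" using gauge_pos[OF assms] .
  then show ?thesis using gauge_scaleR[of "1 / gauge x" x] by simp
qed

lemma compact_gauge_sphere: "compact {x. gauge x = 1}"
proof -
  have "closed {x. gauge x = 1}"
    by (rule closed_Collect_eq[OF continuous_on_gauge continuous_on_const])
  moreover have "{x. gauge x = 1} \<subseteq> B" using gauge_le_1_iff by force
  then have "bounded {x. gauge x = 1}"
    using bounded_subset[OF compact_imp_bounded[OF compact_B]] by blast
  ultimately show ?thesis by (simp add: compact_eq_bounded_closed)
qed

lemma gauge_sphere_nonempty: "{x. gauge x = 1} \<noteq> {}"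
proof -
  obtain b :: 'a where "b \<in> Basis" using nonempty_Basis by blast
  then have "(1 / gauge b) *\<^sub>R b \<in> {x. gauge x = 1}" using gauge_normalize nonzero_Basis by blast
  then show ?thesis by blast
qed

subsection \<open>The dual ball and the cones \<open>N(p)\<close>\<close>

lemma dual_gauge_attained:
  obtains x0 where "gauge x0 = 1" "dual_gauge B p = p \<bullet> x0" "\<And>x. gauge x = 1 \<Longrightarrow> p \<bullet> x \<le> p \<bullet> x0"
proof -
  have "continuous_on {x. gauge x = 1} ((\<bullet>) p)" by (intro continuous_intros)
  then obtain x0 where x0: "x0 \<in> {x. gauge x = 1}" "\<forall>y\<in>{x. gauge x = 1}. p \<bullet> y \<le> p \<bullet> x0"
    using continuous_attains_sup[OF compact_gauge_sphere gauge_sphere_nonempty] by blast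
  moreover have "dual_gauge B p = p \<bullet> x0"
    unfolding dual_gauge_def by (rule cSup_eq_maximum) (use x0 in auto)
  ultimately show thesis using that by auto
qed

lemma mem_dual_ball_iff: "p \<in> dual_ball B \<longleftrightarrow> (\<forall>u. p \<bullet> u \<le> gauge u)"
proof
  assume p: "p \<in> dual_ball B"
  obtain x0 where x0: "gauge x0 = 1" "dual_gauge B p = p \<bullet> x0" "\<And>x. gauge x = 1 \<Longrightarrow> p \<bullet> x \<le> p \<bullet> x0"
    using dual_gauge_attained[of p] by auto
  show "\<forall>u. p \<bullet> u \<le> gauge u"
  proof
    fix u
    show "p \<bullet> u \<le> gauge u"
    proof (cases "u = 0")
      case False
      have "p \<bullet> ((1 / gauge u) *\<^sub>R u) \<le> 1"
        using x0 gauge_normalize[OF False] p by (fastforce simp: dual_ball_def)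
      then show ?thesis using gauge_pos[OF False] by (simp add: divide_le_eq)
    qed simp
  qed
next
  assume "\<forall>u. p \<bullet> u \<le> gauge u"
  moreover obtain x0 where "gauge x0 = 1" "dual_gauge B p = p \<bullet> x0" "\<And>x. gauge x = 1 \<Longrightarrow> p \<bullet> x \<le> p \<bullet> x0"
    using dual_gauge_attained[of p] by auto
  ultimately show "p \<in> dual_ball B" by (metis dual_ball_def mem_Collect_eq)
qed

lemma mem_dual_ball_iff_le_1: "p \<in> dual_ball B \<longleftrightarrow> (\<forall>y\<in>B. p \<bullet> y \<le> 1)"
proof
  assume "p \<in> dual_ball B"
  then show "\<forall>y\<in>B. p \<bullet> y \<le> 1" using mem_dual_ball_iff gauge_le_1_iff by (meson order_trans)
next
  assume "\<forall>y\<in>B. p \<bullet> y \<le> 1"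
  moreover obtain x0 where "gauge x0 = 1" "dual_gauge B p = p \<bullet> x0" "\<And>x. gauge x = 1 \<Longrightarrow> p \<bullet> x \<le> p \<bullet> x0"
    using dual_gauge_attained[of p] by auto
  ultimately show "p \<in> dual_ball B" using gauge_le_1_iff by (force simp: dual_ball_def)
qed

lemma dual_ball_norm_le:
  assumes "p \<in> dual_ball B" "r > 0" "cball 0 r \<subseteq> B"
  shows "norm p \<le> 1 / r"
proof (cases "p = 0")
  case False
  then have "(r / norm p) *\<^sub>R p \<in> B" using assms(2,3) by auto
  then have "p \<bullet> ((r / norm p) *\<^sub>R p) \<le> 1" using assms(1) mem_dual_ball_iff_le_1 by blast
  then have "r * norm p \<le> 1" using False by (simp add: dot_square_norm power2_eq_square)
  then show ?thesis using assms(2) by (simp add: le_divide_eq mult.commute)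
qed (use assms in simp)

lemma compact_dual_ball: "compact (dual_ball B)"
proof -
  have "dual_ball B = (\<Inter>y\<in>B. {p. y \<bullet> p \<le> 1})"
    using mem_dual_ball_iff_le_1 by (auto simp: inner_commute)
  then have "closed (dual_ball B)" by (simp add: closed_INT closed_halfspace_le)
  moreover obtain r where "r > 0" "cball 0 r \<subseteq> B" by (rule inner_radius)
  then have "bounded (dual_ball B)" using dual_ball_norm_le unfolding bounded_iff by blast
  ultimately show ?thesis by (simp add: compact_eq_bounded_closed)
qed

lemma convex_dual_ball: "convex (dual_ball B)"
proof -
  have "dual_ball B = (\<Inter>y\<in>B. {p. y \<bullet> p \<le> 1})"
    using mem_dual_ball_iff_le_1 by (auto simp: inner_commute)
  then show ?thesis by (simp add: convex_INT convex_halfspace_le)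
qed

lemma dual_gauge_eq_1:
  assumes "p \<in> dual_ball B" "y \<noteq> 0" "p \<bullet> y = gauge y"
  shows "dual_gauge B p = 1"
proof -
  obtain x0 where x0: "gauge x0 = 1" "dual_gauge B p = p \<bullet> x0" "\<And>x. gauge x = 1 \<Longrightarrow> p \<bullet> x \<le> p \<bullet> x0"
    using dual_gauge_attained[of p] by auto
  have "p \<bullet> ((1 / gauge y) *\<^sub>R y) = 1" using assms(3) gauge_pos[OF assms(2)] by simp
  then have "1 \<le> dual_gauge B p" using x0 gauge_normalize[OF assms(2)] by metis
  then show ?thesis using assms(1) by (simp add: dual_ball_def)
qed

lemma exposed_face_nonempty:
  assumes "dual_gauge B p = 1"
  shows "exposed_face B p \<noteq> {}"
proof -
  obtain x0 where "gauge x0 = 1" "dual_gauge B p = p \<bullet> x0" "\<And>x. gauge x = 1 \<Longrightarrow> p \<bullet> x \<le> p \<bullet> x0"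
    using dual_gauge_attained[of p] by auto
  then have "x0 \<in> exposed_face B p"
    using assms gauge_le_1_iff[of x0] by (simp add: exposed_face_def)
  then show ?thesis by blast
qed

lemma Ncone_iff:
  assumes "p \<in> dual_ball B"
  shows "v \<in> Ncone B p \<longleftrightarrow> p \<bullet> v = gauge v"
proof
  assume v: "v \<in> Ncone B p"
  show "p \<bullet> v = gauge v"
  proof (cases "dual_gauge B p = 1")
    case True
    then obtain t u where tu: "0 \<le> t" "u \<in> B" "p \<bullet> u = 1" "v = t *\<^sub>R u"
      using v unfolding Ncone_def exposed_face_def by auto
    then have "gauge v \<le> p \<bullet> v"
      using gauge_scaleR gauge_le_1_iff[of u] by (simp add: mult_left_le)
    then show ?thesis using assms mem_dual_ball_iff by (simp add: order_antisym)
  next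
    case False
    then show ?thesis using v by (simp add: Ncone_def)
  qed
next
  assume pv: "p \<bullet> v = gauge v"
  show "v \<in> Ncone B p"
  proof (cases "v = 0")
    case True
    show ?thesis
    proof (cases "dual_gauge B p = 1")
      case True
      then obtain u where "u \<in> exposed_face B p" using exposed_face_nonempty by blast
      then show ?thesis using True \<open>v = 0\<close> by (force simp: Ncone_def)
    qed (simp add: Ncone_def True)
  next
    case False
    define u where "u = (1 / gauge v) *\<^sub>R v"
    have "0 < gauge v" using gauge_pos[OF False] .
    have "u \<in> exposed_face B p"
      using pv gauge_normalize[OF False] gauge_le_1_iff[of u] \<open>0 < gauge v\<close>
      by (simp add: u_def exposed_face_def)
    moreover have "v = gauge v *\<^sub>R u" using \<open>0 < gauge v\<close> by (simp add: u_def)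
    ultimately show ?thesis
      using dual_gauge_eq_1[OF assms False pv] \<open>0 < gauge v\<close>
      by (auto simp: Ncone_def intro!: exI[of _ "gauge v"] exI[of _ u])
  qed
qed

lemma gauge_sphere_disjoint_interior:
  assumes "gauge z = 1"
  shows "z \<notin> interior B"
proof
  assume "z \<in> interior B"
  then obtain e where "e > 0" "ball z e \<subseteq> B" using mem_interior by blast
  have "z \<noteq> 0" using assms by auto
  define d where "d = e / (2 * norm z)"
  have "d > 0" using \<open>e > 0\<close> \<open>z \<noteq> 0\<close> by (simp add: d_def)
  have "dist z ((1 + d) *\<^sub>R z) = e/2"
    using \<open>z \<noteq> 0\<close> \<open>d > 0\<close> \<open>e > 0\<close> by (simp add: d_def dist_norm algebra_simps)
  then have "(1 + d) *\<^sub>R z \<in> B" using \<open>e > 0\<close> \<open>ball z e \<subseteq> B\<close> by auto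
  moreover have "gauge ((1 + d) *\<^sub>R z) = 1 + d" using gauge_scaleR[of "1 + d" z] \<open>d > 0\<close> assms by simp
  ultimately show False using gauge_le_1_iff[of "(1 + d) *\<^sub>R z"] \<open>d > 0\<close> by simp
qed

text \<open>A supporting hyperplane of \<open>B\<close> at \<open>z / gauge z\<close> separates that point strictly from the
  interior point \<open>0\<close>, so its normal can be scaled to take the value \<open>1\<close> there.\<close>

lemma gauge_support: "\<exists>p \<in> dual_ball B. p \<bullet> z = gauge z"
proof (cases "z = 0")
  case True
  then show ?thesis using mem_dual_ball_iff gauge_nonneg by (intro bexI[of _ 0]) auto
next
  case False
  define z0 where "z0 = (1 / gauge z) *\<^sub>R z"
  have "gauge z0 = 1" using gauge_normalize[OF False] z0_def by simp
  then have "z0 \<in> B" using gauge_le_1_iff[of z0] by simp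
  have "0 \<in> rel_interior B" "z0 \<notin> rel_interior B"
    using gauge_sphere_disjoint_interior[OF \<open>gauge z0 = 1\<close>] rel_interior_nonempty_interior[of B]
      zero_in_interior_B by auto
  then obtain a where a: "\<And>y. y \<in> B \<Longrightarrow> a \<bullet> z0 \<le> a \<bullet> y" "\<And>y. y \<in> rel_interior B \<Longrightarrow> a \<bullet> z0 < a \<bullet> y"
    using supporting_hyperplane_rel_boundary[OF convex_B \<open>z0 \<in> B\<close>] by metis
  have "a \<bullet> z0 < 0" using a(2)[OF \<open>0 \<in> rel_interior B\<close>] by simp
  define p where "p = (1 / - (a \<bullet> z0)) *\<^sub>R (- a)"
  have "p \<in> dual_ball B"
    using a(1) \<open>a \<bullet> z0 < 0\<close> unfolding mem_dual_ball_iff_le_1 by (simp add: p_def divide_le_eq)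
  moreover have "p \<bullet> z0 = 1" using \<open>a \<bullet> z0 < 0\<close> by (simp add: p_def)
  then have "p \<bullet> z = gauge z" using gauge_pos[OF False] by (simp add: z0_def field_simps)
  ultimately show ?thesis by blast
qed

lemma skewness_nonneg: "0 \<le> skewness B"
  and gauge_uminus_le: "gauge (- z) \<le> skewness B * gauge z"
proof -
  obtain r where r: "r > 0" "cball 0 r \<subseteq> B" by (rule inner_radius)
  obtain R where R: "R > 0" "\<And>y. y \<in> B \<Longrightarrow> norm y \<le> R" using outer_radius by blast
  have "gauge x / gauge (- x) \<le> R / r" if "x \<noteq> 0" for x
  proof -
    have "0 < gauge (- x)" using gauge_pos that by simp
    have "gauge x / gauge (- x) \<le> (norm x / r) / gauge (- x)"
      using gauge_le_norm_div[OF r, of x] \<open>0 < gauge (- x)\<close> by (intro divide_right_mono) auto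
    also have "\<dots> \<le> (norm x / r) / (norm x / R)"
    proof (rule divide_left_mono)
      show "norm x / R \<le> gauge (- x)"
        using norm_le_mult_gauge[OF R, of "- x"] R(1) by (simp add: pos_divide_le_eq mult.commute)
    qed (use that r R \<open>0 < gauge (- x)\<close> in auto)
    also have "\<dots> = R / r" using that by simp
    finally show ?thesis .
  qed
  then have bdd: "bdd_above {gauge x / gauge (- x) | x. x \<noteq> 0}"
    by (intro bdd_aboveI[of _ "R / r"]) blast
  have le_skew: "gauge x / gauge (- x) \<le> skewness B" if "x \<noteq> 0" for x
    unfolding skewness_def by (rule cSup_upper[OF _ bdd]) (use that in blast)
  obtain b :: 'a where "b \<in> Basis" using nonempty_Basis by blast
  then have "b \<noteq> 0" by (rule nonzero_Basis)
  have "0 \<le> gauge b / gauge (- b)" using gauge_nonneg by simp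
  then show "0 \<le> skewness B" using le_skew[OF \<open>b \<noteq> 0\<close>] by linarith
  show "gauge (- z) \<le> skewness B * gauge z"
  proof (cases "z = 0")
    case False
    then show ?thesis using le_skew[of "- z"] gauge_pos[OF False] by (simp add: divide_le_eq)
  qed simp
qed

subsection \<open>Optimality condition for Fermat--Weber points\<close>

definition weighted_dual_sums :: "'i set \<Rightarrow> ('i \<Rightarrow> real) \<Rightarrow> ('i \<Rightarrow> 'a) \<Rightarrow> ('a \<times> real) set" where
  "weighted_dual_sums I w y =
     {((\<Sum>i\<in>I. w i *\<^sub>R p i), (\<Sum>i\<in>I. w i * (p i \<bullet> y i))) | p. \<forall>i\<in>I. p i \<in> dual_ball B}"

lemma weighted_dual_sums_insert:
  assumes "j \<notin> I" "finite I"
  shows "weighted_dual_sums (insert j I) w y =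
    {a + b | a b. a \<in> (\<lambda>p. (w j *\<^sub>R p, w j * (p \<bullet> y j))) ` dual_ball B \<and> b \<in> weighted_dual_sums I w y}"
    (is "?L = ?R")
proof
  show "?L \<subseteq> ?R"
  proof
    fix k assume "k \<in> ?L"
    then obtain p where p: "\<forall>i\<in>insert j I. p i \<in> dual_ball B"
      "k = ((\<Sum>i\<in>insert j I. w i *\<^sub>R p i), (\<Sum>i\<in>insert j I. w i * (p i \<bullet> y i)))"
      unfolding weighted_dual_sums_def by blast
    have "k = (w j *\<^sub>R p j, w j * (p j \<bullet> y j)) + ((\<Sum>i\<in>I. w i *\<^sub>R p i), (\<Sum>i\<in>I. w i * (p i \<bullet> y i)))"
      using p(2) assms by simp
    moreover have "((\<Sum>i\<in>I. w i *\<^sub>R p i), (\<Sum>i\<in>I. w i * (p i \<bullet> y i))) \<in> weighted_dual_sums I w y"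
      using p(1) unfolding weighted_dual_sums_def by blast
    ultimately show "k \<in> ?R" using p(1) by blast
  qed
next
  show "?R \<subseteq> ?L"
  proof
    fix k assume "k \<in> ?R"
    then obtain p0 q where pq: "p0 \<in> dual_ball B" "\<forall>i\<in>I. q i \<in> dual_ball B"
      "k = (w j *\<^sub>R p0, w j * (p0 \<bullet> y j)) + ((\<Sum>i\<in>I. w i *\<^sub>R q i), (\<Sum>i\<in>I. w i * (q i \<bullet> y i)))"
      unfolding weighted_dual_sums_def by blast
    define p where "p = q(j := p0)"
    have "(\<Sum>i\<in>I. w i *\<^sub>R p i) = (\<Sum>i\<in>I. w i *\<^sub>R q i)"
      "(\<Sum>i\<in>I. w i * (p i \<bullet> y i)) = (\<Sum>i\<in>I. w i * (q i \<bullet> y i))"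
      using assms by (auto intro!: sum.cong simp: p_def)
    then have "k = ((\<Sum>i\<in>insert j I. w i *\<^sub>R p i), (\<Sum>i\<in>insert j I. w i * (p i \<bullet> y i)))"
      using pq(3) assms by (simp add: p_def)
    moreover have "\<forall>i\<in>insert j I. p i \<in> dual_ball B" using pq by (auto simp: p_def)
    ultimately show "k \<in> ?L" unfolding weighted_dual_sums_def by blast
  qed
qed

lemma compact_weighted_dual_sums:
  assumes "finite I"
  shows "compact (weighted_dual_sums I w y)"
  using assms
proof (induction I rule: finite_induct)
  case empty
  have "weighted_dual_sums {} w y = {(0, 0)}"
    using gauge_support[of 0] unfolding weighted_dual_sums_def by auto
  then show ?case by simp
next
  case (insert j I)
  have "compact ((\<lambda>p. (w j *\<^sub>R p, w j * (p \<bullet> y j))) ` dual_ball B)"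
    by (rule compact_continuous_image[OF _ compact_dual_ball]) (intro continuous_intros)
  then show ?case
    using weighted_dual_sums_insert[OF insert(2,1)] compact_sums[OF _ insert(3)] by simp
qed

lemma convex_weighted_dual_sums: "convex (weighted_dual_sums I w y)"
proof (rule convexI)
  fix k1 k2 and u v :: real
  assume k: "k1 \<in> weighted_dual_sums I w y" "k2 \<in> weighted_dual_sums I w y"
    and uv: "0 \<le> u" "0 \<le> v" "u + v = 1"
  obtain p where p: "\<forall>i\<in>I. p i \<in> dual_ball B"
    "k1 = ((\<Sum>i\<in>I. w i *\<^sub>R p i), (\<Sum>i\<in>I. w i * (p i \<bullet> y i)))"
    using k(1) unfolding weighted_dual_sums_def by blast
  obtain q where q: "\<forall>i\<in>I. q i \<in> dual_ball B"
    "k2 = ((\<Sum>i\<in>I. w i *\<^sub>R q i), (\<Sum>i\<in>I. w i * (q i \<bullet> y i)))"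
    using k(2) unfolding weighted_dual_sums_def by blast
  define m where "m i = u *\<^sub>R p i + v *\<^sub>R q i" for i
  have "\<forall>i\<in>I. m i \<in> dual_ball B"
    using p(1) q(1) uv convexD[OF convex_dual_ball] unfolding m_def by blast
  moreover have "u *\<^sub>R k1 + v *\<^sub>R k2 = ((\<Sum>i\<in>I. w i *\<^sub>R m i), (\<Sum>i\<in>I. w i * (m i \<bullet> y i)))"
    unfolding p(2) q(2) m_def
    by (simp add: scaleR_sum_right sum_distrib_left sum.distrib[symmetric] algebra_simps inner_add_left)
  ultimately show "u *\<^sub>R k1 + v *\<^sub>R k2 \<in> weighted_dual_sums I w y"
    unfolding weighted_dual_sums_def by blast
qed


text \<open>The point \<open>(0, f(x))\<close> lies in the compact convex set
  \<open>weighted_dual_sums\<close>: otherwise a separating hyperplane with normal \<open>(d, l)\<close> has \<open>l < 0\<close>,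
  and \<open>x - d / (-l)\<close> has a strictly smaller weighted sum of gauges than \<open>x\<close>.\<close>

lemma fermat_weber_optimality:
  fixes I :: "'i set" and a :: "'i \<Rightarrow> 'a"
  assumes "finite I" "\<forall>i\<in>I. 0 < w i" "fermat_weber_point B I a w x"
  shows "\<exists>p. (\<forall>i\<in>I. p i \<in> dual_ball B \<and> p i \<bullet> (x - a i) = gauge (x - a i)) \<and> (\<Sum>i\<in>I. w i *\<^sub>R p i) = 0"
proof -
  define y where "y i = x - a i" for i
  define f where "f = (\<Sum>i\<in>I. w i * gauge (y i))"
  have "f \<ge> 0" unfolding f_def using assms(2) gauge_nonneg by (intro sum_nonneg) auto
  have "(0, f) \<in> weighted_dual_sums I w y"
  proof (rule ccontr)
    assume "(0, f) \<notin> weighted_dual_sums I w y"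
    then obtain d l b where sep: "(d, l) \<bullet> (0, f) < b" "\<forall>k\<in>weighted_dual_sums I w y. (d, l) \<bullet> k > b"
      using separating_hyperplane_closed_point[OF convex_weighted_dual_sums
          compact_imp_closed[OF compact_weighted_dual_sums[OF assms(1)]]]
      by (metis surj_pair)
    have "\<forall>i. \<exists>q \<in> dual_ball B. q \<bullet> (- (d + l *\<^sub>R y i)) = gauge (- (d + l *\<^sub>R y i))"
      using gauge_support by blast
    then obtain p where p: "\<And>i. p i \<in> dual_ball B" "\<And>i. p i \<bullet> (- (d + l *\<^sub>R y i)) = gauge (- (d + l *\<^sub>R y i))"
      by metis
    have "((\<Sum>i\<in>I. w i *\<^sub>R p i), (\<Sum>i\<in>I. w i * (p i \<bullet> y i))) \<in> weighted_dual_sums I w y"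
      using p(1) unfolding weighted_dual_sums_def by blast
    then have "b < (d, l) \<bullet> ((\<Sum>i\<in>I. w i *\<^sub>R p i), (\<Sum>i\<in>I. w i * (p i \<bullet> y i)))"
      using sep(2) by blast
    also have "\<dots> = (\<Sum>i\<in>I. w i * (p i \<bullet> (d + l *\<^sub>R y i)))"
      by (simp add: inner_sum_right sum_distrib_left sum.distrib[symmetric]
          algebra_simps inner_add_right inner_commute)
    also have "\<dots> = - (\<Sum>i\<in>I. w i * gauge (- (d + l *\<^sub>R y i)))"
    proof -
      have "p i \<bullet> (d + l *\<^sub>R y i) = - gauge (- (d + l *\<^sub>R y i))" for i
        using p(2)[of i] by (simp only: inner_minus_right)
      then show ?thesis by (simp add: sum_negf[symmetric])
    qed
    finally have less: "(\<Sum>i\<in>I. w i * gauge (- (d + l *\<^sub>R y i))) < - (l * f)"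
      using sep(1) by simp
    moreover have "0 \<le> (\<Sum>i\<in>I. w i * gauge (- (d + l *\<^sub>R y i)))"
      using assms(2) gauge_nonneg by (intro sum_nonneg) auto
    ultimately have "l * f < 0" by linarith
    then have "l < 0" using \<open>f \<ge> 0\<close> by (metis mult_nonneg_nonneg not_le)
    define z where "z = x - (1 / - l) *\<^sub>R d"
    have "gauge (- (d + l *\<^sub>R y i)) = - l * gauge (z - a i)" for i
    proof -
      have "- (d + l *\<^sub>R y i) = (- l) *\<^sub>R (z - a i)"
        using \<open>l < 0\<close> by (simp add: z_def y_def algebra_simps)
      then show ?thesis using \<open>l < 0\<close> gauge_scaleR[of "- l" "z - a i"] by simp
    qed
    then have "(\<Sum>i\<in>I. w i * gauge (- (d + l *\<^sub>R y i))) = - l * (\<Sum>i\<in>I. w i * gauge (z - a i))"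
      by (simp add: sum_distrib_left algebra_simps)
    then have "(\<Sum>i\<in>I. w i * gauge (z - a i)) < f"
      using less \<open>l < 0\<close> by (simp add: mult_less_cancel_left_neg)
    then show False
      using assms(3) unfolding fermat_weber_point_def f_def y_def by (meson not_le)
  qed
  then obtain p where p: "\<forall>i\<in>I. p i \<in> dual_ball B" "(\<Sum>i\<in>I. w i *\<^sub>R p i) = 0"
    "(\<Sum>i\<in>I. w i * (p i \<bullet> y i)) = (\<Sum>i\<in>I. w i * gauge (y i))"
    unfolding weighted_dual_sums_def f_def by auto
  have le: "w i * (p i \<bullet> y i) \<le> w i * gauge (y i)" if "i \<in> I" for i
    using p(1) that assms(2) mem_dual_ball_iff by (intro mult_left_mono) (auto simp: less_imp_le)
  have "w i * (p i \<bullet> y i) = w i * gauge (y i)" if "i \<in> I" for i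
    by (rule sum_mono_inv[OF p(3) le that assms(1)])
  then have "p i \<bullet> y i = gauge (y i)" if "i \<in> I" for i
    using that assms(2) by (metis less_irrefl mult_cancel_left)
  then show ?thesis using p unfolding y_def by blast
qed

subsection \<open>Bounded elementary convex sets\<close>

lemma mem_elem_set_iff:
  assumes "\<forall>s\<in>S. p s \<in> dual_ball B"
  shows "z \<in> elem_set B S p \<longleftrightarrow> (\<forall>s\<in>S. p s \<bullet> (z - s) = gauge (z - s))"
proof -
  have "z \<in> (\<lambda>v. s + v) ` Ncone B (p s) \<longleftrightarrow> z - s \<in> Ncone B (p s)" for s
    by (auto simp: image_iff intro: bexI[of _ "z - s"])
  then show ?thesis using assms Ncone_iff by (simp add: elem_set_def)
qed

lemma gauge_le_on_elem_set:
  assumes "\<forall>s\<in>S. 0 \<le> w s" "\<forall>s\<in>S. p s \<in> dual_ball B" "z \<in> elem_set B S p"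
  shows "sum w S * gauge z \<le> (\<Sum>s\<in>S. w s *\<^sub>R p s) \<bullet> z + (\<Sum>s\<in>S. w s * (gauge s - p s \<bullet> s))"
proof -
  have "w s * gauge z \<le> w s * (p s \<bullet> z) + w s * (gauge s - p s \<bullet> s)" if "s \<in> S" for s
  proof -
    have "gauge z \<le> gauge (z - s) + gauge s" using gauge_triangle[of "z - s" s] by simp
    also have "gauge (z - s) = p s \<bullet> z - p s \<bullet> s"
      using assms(2,3) that mem_elem_set_iff by (simp add: inner_diff_right)
    finally have "w s * gauge z \<le> w s * (p s \<bullet> z + (gauge s - p s \<bullet> s))"
      using assms(1) that by (intro mult_left_mono) auto
    then show ?thesis by (simp add: distrib_left)
  qed
  then have "(\<Sum>s\<in>S. w s * gauge z) \<le> (\<Sum>s\<in>S. w s * (p s \<bullet> z) + w s * (gauge s - p s \<bullet> s))"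
    by (rule sum_mono)
  then show ?thesis by (simp add: sum.distrib sum_distrib_right inner_sum_left)
qed

text \<open>On the elementary set, \<open>(w(S) - \<sigma> w(T)) \<gamma>(z)\<close> is bounded by a constant: the balance
  condition turns the \<open>S\<close>-part of \<open>\<Sum> w p \<bullet> z\<close> into \<open>\<Sum>\<^sub>T w p \<bullet> (-z) \<le> w(T) \<gamma>(-z) \<le> \<sigma> w(T) \<gamma>(z)\<close>.\<close>

lemma bounded_elem_set:
  assumes "\<forall>s\<in>S. 0 \<le> w s" "\<forall>t\<in>T. 0 \<le> w t" "\<forall>i\<in>S \<union> T. p i \<in> dual_ball B"
    and "(\<Sum>s\<in>S. w s *\<^sub>R p s) + (\<Sum>t\<in>T. w t *\<^sub>R p t) = 0"
    and "skewness B * sum w T < sum w S"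
  shows "bounded (elem_set B S p)"
proof -
  define K where "K = (\<Sum>s\<in>S. w s * (gauge s - p s \<bullet> s))"
  define c where "c = sum w S - skewness B * sum w T"
  have bound: "c * gauge z \<le> K" if z: "z \<in> elem_set B S p" for z
  proof -
    have "(\<Sum>s\<in>S. w s *\<^sub>R p s) \<bullet> z = (\<Sum>t\<in>T. w t * (p t \<bullet> (- z)))"
      using assms(4) by (simp add: eq_neg_iff_add_eq_0[symmetric] inner_sum_left sum_negf)
    also have "\<dots> \<le> (\<Sum>t\<in>T. w t * gauge (- z))"
      using assms(2,3) mem_dual_ball_iff by (intro sum_mono mult_left_mono) blast+
    also have "\<dots> \<le> sum w T * (skewness B * gauge z)"
      using gauge_uminus_le[of z] assms(2) by (simp add: sum_distrib_right[symmetric] mult_left_mono sum_nonneg)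
    finally show ?thesis
      using gauge_le_on_elem_set[OF assms(1) _ z] assms(3) by (simp add: c_def K_def algebra_simps)
  qed
  have "c > 0" using assms(5) by (simp add: c_def)
  obtain R where R: "R > 0" "\<And>y. y \<in> B \<Longrightarrow> norm y \<le> R" using outer_radius by blast
  have "norm z \<le> R * (K / c)" if "z \<in> elem_set B S p" for z
  proof -
    have "norm z \<le> R * gauge z" by (rule norm_le_mult_gauge[OF R])
    also have "\<dots> \<le> R * (K / c)"
      using \<open>c > 0\<close> R(1) bound[OF that] by (simp add: pos_le_divide_eq mult.commute)
    finally show ?thesis .
  qed
  then show ?thesis unfolding bounded_iff by blast
qed

end

theorem mainTheorem7:
  fixes B :: "'a::euclidean_space set" and A C :: "'a set"
    and w :: "'a \<Rightarrow> real" and c :: "'a \<Rightarrow> 'a" and x :: 'a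
  assumes "is_gauge_ball B"
    and "finite A"
    and "\<forall>a\<in>A. 0 < w a"
    and "sum w A = 1"
    and "C \<subseteq> A"
    and "sum w C < 1 / (1 + skewness B)"
    and "fermat_weber_point B A (\<lambda>a. if a \<in> C then c a else a) w x"
  shows "x \<in> elementary_hull B (A - C)"
proof -
  interpret gauge_ball B by unfold_locales (rule assms(1))
  obtain p where p: "\<forall>i\<in>A. p i \<in> dual_ball B"
    "\<forall>i\<in>A. p i \<bullet> (x - (if i \<in> C then c i else i)) = gauge (x - (if i \<in> C then c i else i))"
    "(\<Sum>i\<in>A. w i *\<^sub>R p i) = 0"
    using fermat_weber_optimality[OF assms(2,3,7)] by blast
  have "x \<in> elem_set B (A - C) p"
    using p(1,2) by (subst mem_elem_set_iff) auto
  moreover have "bounded (elem_set B (A - C) p)"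
  proof (rule bounded_elem_set)
    show "(\<Sum>s\<in>A - C. w s *\<^sub>R p s) + (\<Sum>t\<in>C. w t *\<^sub>R p t) = 0"
      using sum.subset_diff[OF assms(5,2), of "\<lambda>i. w i *\<^sub>R p i"] p(3) by simp
    have "sum w (A - C) + sum w C = 1"
      using sum.subset_diff[OF assms(5,2), of w] assms(4) by simp
    then show "skewness B * sum w C < sum w (A - C)"
      using assms(6) skewness_nonneg by (simp add: less_divide_eq algebra_simps)
  qed (use assms(3,5) p(1) in \<open>auto simp: less_imp_le\<close>)
  ultimately show ?thesis
    using p(1) unfolding elementary_hull_def by blast
qed

end
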